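(* Let $T>0$, $s_0\ge0$ and $S>3/2$. There is a constant $C(S)$ depending only on $S$ such that for every $m\in\mathbb{N}$ and every $v^0\in\dot H^{s_0}$, the solution $v^{(m)}$ of the Galerkin system described in the context with $v^{(m)}(0)=v^0$ satisfies $$\|\partial_t v^{(m)}(t)\|_{\dot H^{-S}}\le C(S)\,\|v^0\|_{\dot H^0}^2,$$ uniformly in $m$, $T$ and $s_0$.
   Context: Write $\mathbb{Z}_0=\mathbb{Z}\setminus\{0\}$. For $s\in\mathbb{R}$, $\dot H^s$ denotes the Hilbert space of sequences $v=(v_k)_{k\in\mathbb{Z}_0}$ of complex numbers with $v_{-k}=\overline{v_k}$ and $\|v\|_{\dot H^s}^2=\sum_{k\in\mathbb{Z}_0}|k|^{2s}|v_k|^2<\infty$. For $m\in\mathbb{N}$ the Galerkin (truncated) KdV system is: for $k\in\mathbb{Z}_0$, $$\partial_t v^{(m)}_k=\begin{cases}\tfrac12 ik\sum_{k_1+k_2=k,\ k_1,k_2\in\mathbb{Z}_0,\ |k_1|,|k_2|\le m}e^{3ikk_1k_2t}v^{(m)}_{k_1}v^{(m)}_{k_2},&|k|\le m,\\ 0,&|k|>m,\end{cases}\qquad v^{(m)}(0)=v^0;$$ its solutions exist for all $t\ge0$. *)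

theory Defs
  imports "HOL-Analysis.Analysis"
begin

text \<open>Index set Z_0 = Z minus {0}. Sequences are functions int => complex;
  the value at index 0 is irrelevant.\<close>
definition Z0 :: "int set" where
  "Z0 = {k. k \<noteq> 0}"

definition hdot_norm_sq :: "real \<Rightarrow> (int \<Rightarrow> complex) \<Rightarrow> real" where
  "hdot_norm_sq s v = (\<Sum>\<^sub>\<infinity>k\<in>Z0. \<bar>real_of_int k\<bar> powr (2 * s) * (cmod (v k))\<^sup>2)"

definition hdot_norm :: "real \<Rightarrow> (int \<Rightarrow> complex) \<Rightarrow> real" where
  "hdot_norm s v = sqrt (hdot_norm_sq s v)"

definition in_Hdot :: "real \<Rightarrow> (int \<Rightarrow> complex) \<Rightarrow> bool" where
  "in_Hdot s v \<longleftrightarrow> (\<forall>k\<in>Z0. v (-k) = cnj (v k)) \<and>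
     (\<lambda>k. \<bar>real_of_int k\<bar> powr (2 * s) * (cmod (v k))\<^sup>2) summable_on Z0"

definition galerkin_rhs :: "nat \<Rightarrow> real \<Rightarrow> (int \<Rightarrow> complex) \<Rightarrow> int \<Rightarrow> complex" where
  "galerkin_rhs m t u k =
     (if \<bar>k\<bar> \<le> int m then
        (1/2) * \<i> * of_int k *
        (\<Sum>(k1, k2) \<in> {(k1, k2). k1 + k2 = k \<and> k1 \<in> Z0 \<and> k2 \<in> Z0 \<and>
                                  \<bar>k1\<bar> \<le> int m \<and> \<bar>k2\<bar> \<le> int m}.
           exp (3 * \<i> * of_int k * of_int k1 * of_int k2 * of_real t) * u k1 * u k2)
      else 0)"

definition galerkin_solution ::
  "nat \<Rightarrow> real \<Rightarrow> real \<Rightarrow> (int \<Rightarrow> complex) \<Rightarrow> (real \<Rightarrow> int \<Rightarrow> complex) \<Rightarrow> bool" where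
  "galerkin_solution m T s0 v0 v \<longleftrightarrow>
     (\<forall>k\<in>Z0. v 0 k = v0 k) \<and>
     (\<forall>t\<in>{0..T}. in_Hdot s0 (v t)) \<and>
     (\<forall>k\<in>Z0. \<forall>t\<in>{0..T}.
        ((\<lambda>\<tau>. v \<tau> k) has_vector_derivative galerkin_rhs m t (v t) k) (at t within {0..T}))"

definition time_deriv :: "real \<Rightarrow> (real \<Rightarrow> int \<Rightarrow> complex) \<Rightarrow> real \<Rightarrow> int \<Rightarrow> complex" where
  "time_deriv T v t k = vector_derivative (\<lambda>\<tau>. v \<tau> k) (at t within {0..T})"

end

theory Submission
  imports Defs
begin

text \<open>The Galerkin flow conserves the truncated energy \<open>E = \<Sum> |v\<^sub>k|\<^sup>2\<close> over \<open>0 < |k| \<le> m\<close>: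
  its time derivative is a cubic sum over zero-sum triples \<open>(a, b, c)\<close> whose summand is
  symmetric up to the weight \<open>c\<close>, so symmetrising replaces \<open>c\<close> by \<open>(a + b + c)/3 = 0\<close>.
  By \<open>|v\<^sub>a v\<^sub>b| \<le> (|v\<^sub>a|\<^sup>2 + |v\<^sub>b|\<^sup>2)/2\<close> each mode of the right-hand side is at most
  \<open>|k| E/2\<close>, so the squared \<open>H\<^sup>-\<^sup>S\<close> norm of the time derivative is at most
  \<open>(E/2)\<^sup>2 \<Sum>\<^sub>k |k|\<^bsup>2-2S\<^esup>\<close>, a series that converges precisely for \<open>S > 3/2\<close>;
  and \<open>E(t) = E(0) \<le> \<parallel>v\<^sup>0\<parallel>\<^sup>2\<close> in \<open>H\<^sup>0\<close>.\<close>

definition modes :: "nat \<Rightarrow> int set" where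
  "modes m = {k. k \<in> Z0 \<and> \<bar>k\<bar> \<le> int m}"

definition mode_pairs :: "nat \<Rightarrow> int \<Rightarrow> (int \<times> int) set" where
  "mode_pairs m k = {(k1, k2). k1 + k2 = k \<and> k1 \<in> modes m \<and> k2 \<in> modes m}"

definition zero_sum_triples :: "nat \<Rightarrow> (int \<times> int \<times> int) set" where
  "zero_sum_triples m = {(a, b, c). a \<in> modes m \<and> b \<in> modes m \<and> c \<in> modes m \<and> a + b + c = 0}"

definition galerkin_energy :: "nat \<Rightarrow> (int \<Rightarrow> complex) \<Rightarrow> real" where
  "galerkin_energy m w = (\<Sum>k\<in>modes m. (cmod (w k))\<^sup>2)"

lemma finite_modes: "finite (modes m)"
  by (rule finite_subset[of _ "{-int m..int m}"]) (auto simp: modes_def)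

lemma finite_mode_pairs: "finite (mode_pairs m k)"
  by (rule finite_subset[of _ "modes m \<times> modes m"]) (auto simp: mode_pairs_def finite_modes)

lemma galerkin_energy_nonneg: "galerkin_energy m w \<ge> 0"
  by (simp add: galerkin_energy_def sum_nonneg)

lemma galerkin_rhs_eq:
  "galerkin_rhs m t w k = (if \<bar>k\<bar> \<le> int m then (1/2) * \<i> * of_int k *
     (\<Sum>(k1, k2) \<in> mode_pairs m k.
        exp (3 * \<i> * of_int k * of_int k1 * of_int k2 * of_real t) * w k1 * w k2) else 0)"
proof -
  have "mode_pairs m k = {(k1, k2). k1 + k2 = k \<and> k1 \<in> Z0 \<and> k2 \<in> Z0 \<and>
      \<bar>k1\<bar> \<le> int m \<and> \<bar>k2\<bar> \<le> int m}"
    by (auto simp: mode_pairs_def modes_def)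
  then show ?thesis unfolding galerkin_rhs_def by simp
qed

lemma galerkin_rhs_uminus:
  assumes real: "\<forall>k\<in>Z0. w (-k) = cnj (w k)"
  shows "galerkin_rhs m t w (-k) = cnj (galerkin_rhs m t w k)"
proof -
  let ?term = "\<lambda>k k1 k2. exp (3 * \<i> * of_int k * of_int k1 * of_int k2 * of_real t) * w k1 * w k2"
  have neg: "mode_pairs m (-k) = (\<lambda>(a, b). (-a, -b)) ` mode_pairs m k"
    by (rule set_eqI, rule iffI, rule image_eqI[where x="(- fst x, - snd x)" for x])
       (auto simp: mode_pairs_def modes_def Z0_def)
  have inj: "inj_on (\<lambda>(a, b). (-a, -b::int)) (mode_pairs m k)"
    by (auto simp: inj_on_def)
  have "(\<Sum>(k1, k2) \<in> mode_pairs m (-k). ?term (-k) k1 k2)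
      = (\<Sum>(k1, k2) \<in> mode_pairs m k. ?term (-k) (-k1) (-k2))"
    unfolding neg by (subst sum.reindex[OF inj]) (simp add: case_prod_unfold)
  also have "\<dots> = (\<Sum>(k1, k2) \<in> mode_pairs m k. cnj (?term k k1 k2))"
    using real by (intro sum.cong) (auto simp: mode_pairs_def modes_def exp_cnj)
  finally show ?thesis
    unfolding galerkin_rhs_eq by (simp add: case_prod_unfold)
qed

lemma sum_zero_sum_triples_weighted_eq_0:
  fixes g :: "int \<Rightarrow> int \<Rightarrow> int \<Rightarrow> complex"
  assumes swap13: "\<And>a b c. g a b c = g c b a" and swap23: "\<And>a b c. g a b c = g a c b"
  shows "(\<Sum>(a, b, c)\<in>zero_sum_triples m. of_int c * g a b c) = 0"
proof -
  let ?X = "\<lambda>f. (\<Sum>(a, b, c)\<in>zero_sum_triples m. f a b c * g a b c)"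
  have bij13: "bij_betw (\<lambda>(a, b, c). (c, b, a)) (zero_sum_triples m) (zero_sum_triples m)"
    by (rule bij_betwI[where g="\<lambda>(a, b, c). (c, b, a)"]) (auto simp: zero_sum_triples_def)
  have bij23: "bij_betw (\<lambda>(a, b, c). (a, c, b)) (zero_sum_triples m) (zero_sum_triples m)"
    by (rule bij_betwI[where g="\<lambda>(a, b, c). (a, c, b)"]) (auto simp: zero_sum_triples_def)
  have ca: "?X (\<lambda>a b c. of_int c) = ?X (\<lambda>a b c. of_int a)"
    using sum.reindex_bij_betw[OF bij13, of "\<lambda>(a, b, c). of_int c * g a b c"]
    by (simp add: case_prod_unfold swap13[symmetric])
  have cb: "?X (\<lambda>a b c. of_int c) = ?X (\<lambda>a b c. of_int b)"
    using sum.reindex_bij_betw[OF bij23, of "\<lambda>(a, b, c). of_int c * g a b c"]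
    by (simp add: case_prod_unfold swap23[symmetric])
  have "?X (\<lambda>a b c. of_int a) + ?X (\<lambda>a b c. of_int b) + ?X (\<lambda>a b c. of_int c)
      = (\<Sum>(a, b, c)\<in>zero_sum_triples m. of_int (a + b + c) * g a b c)"
    by (simp add: sum.distrib[symmetric] case_prod_unfold algebra_simps)
  also have "\<dots> = 0"
    by (rule sum.neutral) (auto simp: zero_sum_triples_def simp del: of_int_add)
  finally show ?thesis using ca cb by simp
qed

lemma sum_galerkin_rhs_mult_uminus_eq_0:
  "(\<Sum>k\<in>modes m. galerkin_rhs m t w k * w (-k)) = 0"
proof -
  let ?summand = "\<lambda>(k, a, b). (1/2) * \<i> * of_int k *
      (exp (3 * \<i> * of_int k * of_int a * of_int b * of_real t) * w a * w b) * w (-k)"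
  define g where "g a b c = exp (- 3 * \<i> * of_int a * of_int b * of_int c * of_real t) * w a * w b * w c"
    for a b c
  have bij: "bij_betw (\<lambda>(a, b, c). (-c, a, b)) (zero_sum_triples m) (Sigma (modes m) (mode_pairs m))"
    by (rule bij_betwI[where g="\<lambda>(k, a, b). (a, b, -k)"])
       (auto simp: zero_sum_triples_def modes_def mode_pairs_def Z0_def)
  have "(\<Sum>k\<in>modes m. galerkin_rhs m t w k * w (-k))
      = (\<Sum>k\<in>modes m. \<Sum>(a, b)\<in>mode_pairs m k. ?summand (k, a, b))"
    by (intro sum.cong)
       (auto simp: galerkin_rhs_eq modes_def sum_distrib_left sum_distrib_right case_prod_unfold mult.assoc)
  also have "\<dots> = sum ?summand (Sigma (modes m) (mode_pairs m))"
    by (subst sum.Sigma) (auto simp: finite_modes finite_mode_pairs case_prod_unfold)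
  also have "\<dots> = (\<Sum>(a, b, c)\<in>zero_sum_triples m. ?summand (-c, a, b))"
    using sum.reindex_bij_betw[OF bij, of ?summand, symmetric] by (simp add: case_prod_unfold)
  also have "\<dots> = - (1/2) * \<i> * (\<Sum>(a, b, c)\<in>zero_sum_triples m. of_int c * g a b c)"
    by (simp add: sum_distrib_left case_prod_unfold g_def algebra_simps)
  also have "\<dots> = 0"
    by (subst sum_zero_sum_triples_weighted_eq_0) (auto simp: g_def algebra_simps)
  finally show ?thesis .
qed

lemma galerkin_energy_flux_eq_0:
  assumes real: "\<forall>k\<in>Z0. w (-k) = cnj (w k)"
  shows "(\<Sum>k\<in>modes m. w k * cnj (galerkin_rhs m t w k) + galerkin_rhs m t w k * cnj (w k)) = 0"
proof -
  let ?R = "galerkin_rhs m t w"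
  have bij: "bij_betw uminus (modes m) (modes m)"
    by (rule bij_betwI[where g=uminus]) (auto simp: modes_def Z0_def)
  have "(\<Sum>k\<in>modes m. w k * cnj (?R k) + ?R k * cnj (w k))
      = (\<Sum>k\<in>modes m. w k * ?R (-k)) + (\<Sum>k\<in>modes m. ?R k * w (-k))"
    unfolding sum.distrib[symmetric]
    by (intro sum.cong) (auto simp: modes_def galerkin_rhs_uminus[OF real] real)
  also have "(\<Sum>k\<in>modes m. w k * ?R (-k)) = (\<Sum>k\<in>modes m. ?R k * w (-k))"
    using sum.reindex_bij_betw[OF bij, of "\<lambda>k. w k * ?R (-k)"] by (simp add: mult.commute)
  finally show ?thesis
    using sum_galerkin_rhs_mult_uminus_eq_0[of m t w] by simp
qed

lemma galerkin_energy_conservation: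
  assumes sol: "galerkin_solution m T s0 v0 v" and t: "t \<in> {0..T}"
  shows "galerkin_energy m (v t) = galerkin_energy m v0"
proof -
  define F where "F \<tau> = (\<Sum>k\<in>modes m. v \<tau> k * cnj (v \<tau> k))" for \<tau>
  have "\<exists>c. \<forall>x\<in>{0..T}. F x = c"
  proof (rule has_derivative_zero_constant)
    fix x assume x: "x \<in> {0..T}"
    have real: "\<forall>k\<in>Z0. v x (-k) = cnj (v x k)"
      using sol x by (auto simp: galerkin_solution_def in_Hdot_def)
    have "\<And>k. k \<in> modes m \<Longrightarrow>
        ((\<lambda>\<tau>. v \<tau> k) has_vector_derivative galerkin_rhs m x (v x) k) (at x within {0..T})"
      using sol x by (auto simp: galerkin_solution_def modes_def)
    then have "(F has_vector_derivative (\<Sum>k\<in>modes m. v x k * cnj (galerkin_rhs m x (v x) k)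
        + galerkin_rhs m x (v x) k * cnj (v x k))) (at x within {0..T})"
      unfolding F_def
      by (intro has_vector_derivative_sum has_vector_derivative_mult has_vector_derivative_cnj)
    then show "(F has_derivative (\<lambda>h. 0)) (at x within {0..T})"
      using galerkin_energy_flux_eq_0[OF real] by (simp add: has_vector_derivative_def)
  qed simp
  then have "F t = F 0"
    using t by force
  moreover have "\<And>\<tau>. F \<tau> = of_real (galerkin_energy m (v \<tau>))"
    unfolding F_def galerkin_energy_def of_real_sum complex_norm_square ..
  moreover have "galerkin_energy m (v 0) = galerkin_energy m v0"
    using sol by (auto simp: galerkin_solution_def galerkin_energy_def modes_def intro!: sum.cong)
  ultimately show ?thesis by (metis of_real_eq_iff)
qed

lemma sum_mode_pairs_fst_le:
  fixes f :: "int \<Rightarrow> real"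
  assumes "\<And>j. f j \<ge> 0"
  shows "(\<Sum>(a, b)\<in>mode_pairs m k. f a) \<le> (\<Sum>j\<in>modes m. f j)"
proof -
  have "inj_on fst (mode_pairs m k)"
    by (auto simp: inj_on_def mode_pairs_def)
  then have "(\<Sum>(a, b)\<in>mode_pairs m k. f a) = (\<Sum>j\<in>fst ` mode_pairs m k. f j)"
    by (simp add: sum.reindex case_prod_unfold)
  also have "\<dots> \<le> (\<Sum>j\<in>modes m. f j)"
    by (rule sum_mono2[OF finite_modes]) (auto simp: mode_pairs_def assms)
  finally show ?thesis .
qed

lemma sum_mode_pairs_snd_le:
  fixes f :: "int \<Rightarrow> real"
  assumes "\<And>j. f j \<ge> 0"
  shows "(\<Sum>(a, b)\<in>mode_pairs m k. f b) \<le> (\<Sum>j\<in>modes m. f j)"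
proof -
  have "inj_on snd (mode_pairs m k)"
    by (auto simp: inj_on_def mode_pairs_def)
  then have "(\<Sum>(a, b)\<in>mode_pairs m k. f b) = (\<Sum>j\<in>snd ` mode_pairs m k. f j)"
    by (simp add: sum.reindex case_prod_unfold)
  also have "\<dots> \<le> (\<Sum>j\<in>modes m. f j)"
    by (rule sum_mono2[OF finite_modes]) (auto simp: mode_pairs_def assms)
  finally show ?thesis .
qed

lemma norm_galerkin_rhs_le:
  "cmod (galerkin_rhs m t w k) \<le> \<bar>real_of_int k\<bar> / 2 * galerkin_energy m w"
proof (cases "\<bar>k\<bar> \<le> int m")
  case False
  then show ?thesis by (simp add: galerkin_rhs_eq galerkin_energy_nonneg)
next
  case True
  let ?sum = "\<Sum>(k1, k2) \<in> mode_pairs m k.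
      exp (3 * \<i> * of_int k * of_int k1 * of_int k2 * of_real t) * w k1 * w k2"
  have unimodular: "cmod (exp (3 * \<i> * of_int k * of_int a * of_int b * of_real t)) = 1" for a b :: int
    using norm_exp_i_times[of "3 * k * a * b * t"] by (simp add: mult.assoc mult.left_commute)
  have amgm: "cmod (w a) * cmod (w b) \<le> ((cmod (w a))\<^sup>2 + (cmod (w b))\<^sup>2) / 2" for a b
    using sum_squares_bound[of "cmod (w a)" "cmod (w b)"] by simp
  have "cmod ?sum \<le> (\<Sum>(a, b) \<in> mode_pairs m k. cmod (w a) * cmod (w b))"
    by (rule order_trans[OF norm_sum]) (simp add: case_prod_unfold norm_mult unimodular)
  also have "\<dots> \<le> (\<Sum>(a, b) \<in> mode_pairs m k. ((cmod (w a))\<^sup>2 + (cmod (w b))\<^sup>2) / 2)"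
    by (rule sum_mono) (simp only: case_prod_unfold amgm)
  also have "\<dots> = ((\<Sum>(a, b) \<in> mode_pairs m k. (cmod (w a))\<^sup>2)
      + (\<Sum>(a, b) \<in> mode_pairs m k. (cmod (w b))\<^sup>2)) / 2"
    by (simp add: sum.distrib[symmetric] sum_divide_distrib case_prod_unfold)
  also have "\<dots> \<le> galerkin_energy m w"
    using sum_mode_pairs_fst_le[of "\<lambda>j. (cmod (w j))\<^sup>2" m k]
      sum_mode_pairs_snd_le[of "\<lambda>j. (cmod (w j))\<^sup>2" m k]
    by (simp add: galerkin_energy_def)
  finally have "cmod ?sum \<le> galerkin_energy m w" .
  moreover have "cmod (galerkin_rhs m t w k) = \<bar>real_of_int k\<bar> / 2 * cmod ?sum"
    using True by (simp add: galerkin_rhs_eq norm_mult)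
  ultimately show ?thesis by (simp add: mult_left_mono)
qed

lemma sum_modes_abs_powr_le:
  assumes "p < -1"
  shows "(\<Sum>k\<in>modes m. \<bar>real_of_int k\<bar> powr p) \<le> 2 * (\<Sum>n. real n powr p)"
proof -
  have summable: "summable (\<lambda>n. real n powr p)"
    using summable_real_powr_iff[of p] assms by simp
  have split: "modes m = int ` {1..m} \<union> (\<lambda>n. - int n) ` {1..m}"
  proof (rule set_eqI, rule iffI)
    fix k assume "k \<in> modes m"
    then have "k = int (nat \<bar>k\<bar>) \<or> k = - int (nat \<bar>k\<bar>)" "nat \<bar>k\<bar> \<in> {1..m}"
      by (auto simp: modes_def Z0_def)
    then show "k \<in> int ` {1..m} \<union> (\<lambda>n. - int n) ` {1..m}" by blast
  qed (auto simp: modes_def Z0_def)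
  have "(\<Sum>k\<in>modes m. \<bar>real_of_int k\<bar> powr p)
      = (\<Sum>k\<in>int ` {1..m}. \<bar>real_of_int k\<bar> powr p) + (\<Sum>k\<in>(\<lambda>n. - int n) ` {1..m}. \<bar>real_of_int k\<bar> powr p)"
    unfolding split by (rule sum.union_disjoint) auto
  also have "\<dots> = (\<Sum>n\<in>{1..m}. real n powr p) + (\<Sum>n\<in>{1..m}. real n powr p)"
    by (subst (1 2) sum.reindex) (auto simp: inj_on_def)
  also have "\<dots> \<le> (\<Sum>n. real n powr p) + (\<Sum>n. real n powr p)"
    using sum_le_suminf[OF summable, of "{1..m}"] by simp
  finally show ?thesis by simp
qed

lemma hdot_norm_sq_finite_support:
  assumes "\<And>k. k \<in> Z0 - modes m \<Longrightarrow> w k = 0"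
  shows "(\<lambda>k. \<bar>real_of_int k\<bar> powr (2 * s) * (cmod (w k))\<^sup>2) summable_on Z0"
    and "hdot_norm_sq s w = (\<Sum>k\<in>modes m. \<bar>real_of_int k\<bar> powr (2 * s) * (cmod (w k))\<^sup>2)"
proof -
  let ?f = "\<lambda>k. \<bar>real_of_int k\<bar> powr (2 * s) * (cmod (w k))\<^sup>2"
  have sub: "modes m \<subseteq> Z0" and zero: "\<And>k. k \<in> Z0 - modes m \<Longrightarrow> ?f k = 0"
    using assms by (auto simp: modes_def)
  show "?f summable_on Z0"
    using summable_on_cong_neutral[of "modes m" Z0 ?f ?f] sub zero summable_on_finite[OF finite_modes]
    by auto
  have "infsum ?f Z0 = infsum ?f (modes m)"
    by (rule infsum_cong_neutral) (use sub zero in auto)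
  then show "hdot_norm_sq s w = (\<Sum>k\<in>modes m. ?f k)"
    by (simp add: hdot_norm_sq_def finite_modes)
qed

lemma in_Hdot_galerkin_rhs:
  assumes "\<forall>k\<in>Z0. w (-k) = cnj (w k)"
  shows "in_Hdot s (galerkin_rhs m t w)"
  using hdot_norm_sq_finite_support(1)[of m "galerkin_rhs m t w" s] galerkin_rhs_uminus[OF assms]
  by (auto simp: in_Hdot_def galerkin_rhs_eq modes_def)

lemma hdot_norm_galerkin_rhs_le:
  assumes "S > 3/2"
  shows "hdot_norm (-S) (galerkin_rhs m t w)
    \<le> sqrt (2 * (\<Sum>n. real n powr (2 - 2 * S))) / 2 * galerkin_energy m w"
proof -
  let ?E = "galerkin_energy m w"
  let ?C = "2 * (\<Sum>n. real n powr (2 - 2 * S))"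
  have mode_le: "\<bar>real_of_int k\<bar> powr (2 * - S) * (cmod (galerkin_rhs m t w k))\<^sup>2
      \<le> (?E / 2)\<^sup>2 * \<bar>real_of_int k\<bar> powr (2 - 2 * S)" if "k \<in> modes m" for k
  proof -
    have k: "\<bar>real_of_int k\<bar> > 0" using that by (auto simp: modes_def Z0_def)
    have "(cmod (galerkin_rhs m t w k))\<^sup>2 \<le> (\<bar>real_of_int k\<bar> / 2 * ?E)\<^sup>2"
      by (rule power_mono[OF norm_galerkin_rhs_le norm_ge_zero])
    then have "\<bar>real_of_int k\<bar> powr (2 * - S) * (cmod (galerkin_rhs m t w k))\<^sup>2
        \<le> \<bar>real_of_int k\<bar> powr (2 * - S) * (\<bar>real_of_int k\<bar> / 2 * ?E)\<^sup>2"
      by (rule mult_left_mono) simp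
    also have "\<dots> = (?E / 2)\<^sup>2 * (\<bar>real_of_int k\<bar> powr (2 * - S) * \<bar>real_of_int k\<bar> powr 2)"
      using k by (simp add: power_mult_distrib powr_realpow power2_eq_square)
    also have "\<bar>real_of_int k\<bar> powr (2 * - S) * \<bar>real_of_int k\<bar> powr 2 = \<bar>real_of_int k\<bar> powr (2 - 2 * S)"
      using powr_add[of "\<bar>real_of_int k\<bar>" "2 * - S" 2] by (simp add: algebra_simps)
    finally show ?thesis .
  qed
  have "hdot_norm_sq (-S) (galerkin_rhs m t w)
      = (\<Sum>k\<in>modes m. \<bar>real_of_int k\<bar> powr (2 * - S) * (cmod (galerkin_rhs m t w k))\<^sup>2)"
    by (rule hdot_norm_sq_finite_support(2)) (auto simp: galerkin_rhs_eq modes_def)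
  also have "\<dots> \<le> (\<Sum>k\<in>modes m. (?E / 2)\<^sup>2 * \<bar>real_of_int k\<bar> powr (2 - 2 * S))"
    by (rule sum_mono) (rule mode_le)
  also have "\<dots> \<le> (?E / 2)\<^sup>2 * ?C"
    unfolding sum_distrib_left[symmetric]
    using assms by (intro mult_left_mono sum_modes_abs_powr_le) auto
  finally have "hdot_norm (-S) (galerkin_rhs m t w) \<le> sqrt ((?E / 2)\<^sup>2 * ?C)"
    by (simp add: hdot_norm_def)
  also have "\<dots> = sqrt ?C / 2 * ?E"
    by (simp add: real_sqrt_mult galerkin_energy_nonneg)
  finally show ?thesis .
qed

lemma galerkin_energy_le_hdot_norm:
  assumes "s0 \<ge> 0" and "in_Hdot s0 v0"
  shows "galerkin_energy m v0 \<le> (hdot_norm 0 v0)\<^sup>2"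
proof -
  have weight: "(cmod (v0 k))\<^sup>2 \<le> \<bar>real_of_int k\<bar> powr (2 * s0) * (cmod (v0 k))\<^sup>2" if "k \<in> Z0" for k
  proof -
    have "1 \<le> \<bar>real_of_int k\<bar> powr (2 * s0)"
      using that assms(1) by (auto simp: Z0_def intro: ge_one_powr_ge_zero)
    then show ?thesis
      using mult_right_mono[of 1 _ "(cmod (v0 k))\<^sup>2"] by simp
  qed
  have summable: "(\<lambda>k. (cmod (v0 k))\<^sup>2) summable_on Z0"
    by (rule summable_on_comparison_test[OF _ weight]) (use assms(2) in \<open>auto simp: in_Hdot_def\<close>)
  have "galerkin_energy m v0 = infsum (\<lambda>k. (cmod (v0 k))\<^sup>2) (modes m)"
    by (simp add: galerkin_energy_def finite_modes)
  also have "\<dots> \<le> infsum (\<lambda>k. (cmod (v0 k))\<^sup>2) Z0"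
    by (rule infsum_mono_neutral[OF summable_on_finite[OF finite_modes] summable])
       (auto simp: modes_def)
  also have "\<dots> = hdot_norm_sq 0 v0"
    unfolding hdot_norm_sq_def by (rule infsum_cong) (simp add: Z0_def)
  also have "\<dots> = (hdot_norm 0 v0)\<^sup>2"
    using calculation galerkin_energy_nonneg[of m v0] by (simp add: hdot_norm_def)
  finally show ?thesis .
qed

lemma time_deriv_galerkin_solution:
  assumes "galerkin_solution m T s0 v0 v" and "T > 0" and "t \<in> {0..T}" and "k \<in> Z0"
  shows "time_deriv T v t k = galerkin_rhs m t (v t) k"
  using assms unfolding time_deriv_def galerkin_solution_def
  by (blast intro: vector_derivative_within_closed_interval)

lemma in_Hdot_cong:
  assumes "\<And>k. k \<in> Z0 \<Longrightarrow> u k = w k"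
  shows "in_Hdot s u \<longleftrightarrow> in_Hdot s w"
proof -
  have "\<And>k. k \<in> Z0 \<Longrightarrow> -k \<in> Z0"
    by (simp add: Z0_def)
  then show ?thesis
    using assms summable_on_cong[of Z0 "\<lambda>k. \<bar>real_of_int k\<bar> powr (2 * s) * (cmod (u k))\<^sup>2"
        "\<lambda>k. \<bar>real_of_int k\<bar> powr (2 * s) * (cmod (w k))\<^sup>2"]
    unfolding in_Hdot_def by auto
qed

lemma hdot_norm_cong: "(\<And>k. k \<in> Z0 \<Longrightarrow> u k = w k) \<Longrightarrow> hdot_norm s u = hdot_norm s w"
  unfolding hdot_norm_def hdot_norm_sq_def by (simp cong: infsum_cong)

theorem proposition4p5:
  fixes S :: real
  assumes "S > 3/2"
  shows "\<exists>C::real. \<forall>(T::real) (s0::real) (m::nat) v0 v.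
           T > 0 \<longrightarrow> s0 \<ge> 0 \<longrightarrow> in_Hdot s0 v0 \<longrightarrow> galerkin_solution m T s0 v0 v \<longrightarrow>
           (\<forall>t\<in>{0..T}. in_Hdot (-S) (time_deriv T v t) \<and>
              hdot_norm (-S) (time_deriv T v t) \<le> C * (hdot_norm 0 v0)\<^sup>2)"
proof (intro exI allI impI ballI)
  let ?C = "sqrt (2 * (\<Sum>n. real n powr (2 - 2 * S))) / 2"
  fix T s0 :: real and m :: nat and v0 v t
  assume T: "T > 0" and s0: "s0 \<ge> 0" and v0: "in_Hdot s0 v0"
    and sol: "galerkin_solution m T s0 v0 v" and t: "t \<in> {0..T}"
  have real: "\<forall>k\<in>Z0. v t (-k) = cnj (v t k)"
    using sol t by (auto simp: galerkin_solution_def in_Hdot_def)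
  have deriv: "\<And>k. k \<in> Z0 \<Longrightarrow> time_deriv T v t k = galerkin_rhs m t (v t) k"
    using time_deriv_galerkin_solution[OF sol T t] .
  have series_nonneg: "0 \<le> (\<Sum>n. real n powr (2 - 2 * S))"
    using assms by (intro suminf_nonneg) (auto simp: summable_real_powr_iff)
  have "hdot_norm (-S) (galerkin_rhs m t (v t)) \<le> ?C * galerkin_energy m (v t)"
    by (rule hdot_norm_galerkin_rhs_le[OF assms])
  also have "\<dots> \<le> ?C * (hdot_norm 0 v0)\<^sup>2"
    using galerkin_energy_conservation[OF sol t] galerkin_energy_le_hdot_norm[OF s0 v0] series_nonneg
    by (intro mult_left_mono) auto
  finally have "hdot_norm (-S) (galerkin_rhs m t (v t)) \<le> ?C * (hdot_norm 0 v0)\<^sup>2" .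
  then show "in_Hdot (-S) (time_deriv T v t) \<and> hdot_norm (-S) (time_deriv T v t) \<le> ?C * (hdot_norm 0 v0)\<^sup>2"
    using in_Hdot_galerkin_rhs[OF real] in_Hdot_cong[OF deriv] hdot_norm_cong[OF deriv] by simp
qed

end
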